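(* Let $S\subset\mathbf R^4$ be a surface and let $p\in S$ satisfy $\Delta(p)=0$ and $K(p)=0$. Then $p$ is a critical point of $\Delta$ (so the discriminant curve $\Delta=0$ is singular at $p$) and this singularity is non-Morse, i.e. the Hessian determinant of $\Delta$ at $p$ vanishes.
   Context: With respect to a smooth adapted orthonormal moving frame $e_1,e_2$ (tangent), $e_3,e_4$ (normal), the second fundamental form is $\mathbf{II}(u)=(au_1^2+2bu_1u_2+cu_2^2)e_3+(eu_1^2+2fu_1u_2+gu_2^2)e_4$ for $u=u_1e_1+u_2e_2$; $a,\dots,g$ are smooth functions on $S$. The Gaussian curvature is $K=(ac-b^2)+(eg-f^2)$, and $\Delta=(ac-b^2)(eg-f^2)-\tfrac14(ag+ce-2bf)^2$, regarded as a smooth function on $S$ (in local coordinates); the discriminant curve is $\{\Delta=0\}$. *)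

theory Defs
  imports "HOL-Analysis.Analysis"
begin

text \<open>Local coordinates on the surface S: an open set U of the plane, points of type
  real \<times> real.  Coefficient functions of the second fundamental form are real-valued
  functions on U.\<close>

definition pderiv2 :: "(real \<times> real \<Rightarrow> real) \<Rightarrow> real \<times> real \<Rightarrow> real \<times> real \<Rightarrow> real" where
  "pderiv2 f v x = frechet_derivative f (at x) v"

fun Ck_on :: "nat \<Rightarrow> (real \<times> real) set \<Rightarrow> (real \<times> real \<Rightarrow> real) \<Rightarrow> bool" where
  "Ck_on 0 U f = continuous_on U f"
| "Ck_on (Suc k) U f = (f differentiable_on U \<and> (\<forall>v. Ck_on k U (\<lambda>x. pderiv2 f v x)))"

definition smooth_on_plane :: "(real \<times> real) set \<Rightarrow> (real \<times> real \<Rightarrow> real) \<Rightarrow> bool" where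
  "smooth_on_plane U f = (\<forall>k. Ck_on k U f)"

definition gaussK :: "real \<Rightarrow> real \<Rightarrow> real \<Rightarrow> real \<Rightarrow> real \<Rightarrow> real \<Rightarrow> real" where
  "gaussK a b c e f g = (a*c - b^2) + (e*g - f^2)"

definition discr :: "real \<Rightarrow> real \<Rightarrow> real \<Rightarrow> real \<Rightarrow> real \<Rightarrow> real \<Rightarrow> real" where
  "discr a b c e f g = (a*c - b^2) * (e*g - f^2) - (1/4) * (a*g + c*e - 2*b*f)^2"

definition hessian_det :: "(real \<times> real \<Rightarrow> real) \<Rightarrow> real \<times> real \<Rightarrow> real" where
  "hessian_det F p =
     pderiv2 (pderiv2 F (1,0)) (1,0) p * pderiv2 (pderiv2 F (0,1)) (0,1) p
   - pderiv2 (pderiv2 F (0,1)) (1,0) p * pderiv2 (pderiv2 F (1,0)) (0,1) p"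

end

theory Submission
  imports Defs
begin

text \<open>Write A = ac - b^2, B = eg - f^2, C = ag + ce - 2bf, so that K = A + B and
  \<Delta> = AB - (C/2)^2.  At p, K = 0 turns \<Delta> = 0 into -A^2 = (C/2)^2, so A, B and C all vanish
  there.  Then \<Delta> is a difference of products of functions with a common zero at p: its
  differential vanishes and its Hessian is dA dB + dB dA - 2 d(C/2) d(C/2).  The vanishing of
  A, B, C at p makes the coefficient forms (a,b,c) and (e,f,g) proportional, and this Hessian
  collapses to a rank-one form, so its determinant is zero.\<close>

lemma pderiv2_eqI: "(F has_derivative F') (at x) \<Longrightarrow> pderiv2 F v x = F' v"
  unfolding pderiv2_def by (metis frechet_derivative_at)

lemma has_derivative_pderiv2:
  "F differentiable at x \<Longrightarrow> (F has_derivative (\<lambda>v. pderiv2 F v x)) (at x)"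
  unfolding pderiv2_def using frechet_derivative_works by metis

lemma has_derivative_nhds_cong:
  assumes "\<forall>\<^sub>F y in nhds x. F y = G y"
  shows "(F has_derivative D) (at x) \<longleftrightarrow> (G has_derivative D) (at x)"
proof -
  have "F x = G x"
    using assms by (rule eventually_nhds_x_imp_x)
  moreover have "\<forall>\<^sub>F y in at x. F y = G y"
    using assms by (simp add: eventually_at_filter eventually_mono)
  ultimately show ?thesis
    by (metis (mono_tags, lifting) has_derivative_transform_eventually UNIV_I eventually_mono)
qed

lemma differentiable_nhds_cong:
  assumes "\<forall>\<^sub>F y in nhds x. F y = G y"
  shows "F differentiable at x \<longleftrightarrow> G differentiable at x"
  unfolding differentiable_def using has_derivative_nhds_cong[OF assms] by blast

lemma pderiv2_nhds_cong:
  assumes "\<forall>\<^sub>F y in nhds x. F y = G y"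
  shows "pderiv2 F v x = pderiv2 G v x"
  unfolding pderiv2_def frechet_derivative_def using has_derivative_nhds_cong[OF assms] by simp

lemma pderiv2_const [simp]: "pderiv2 (\<lambda>y. k) v = (\<lambda>x. 0)"
  using pderiv2_eqI[OF has_derivative_const] by blast

lemma pderiv2_add:
  "F differentiable at x \<Longrightarrow> G differentiable at x \<Longrightarrow>
    pderiv2 (\<lambda>y. F y + G y) v x = pderiv2 F v x + pderiv2 G v x"
  by (rule pderiv2_eqI[OF has_derivative_add[OF has_derivative_pderiv2 has_derivative_pderiv2]])

lemma pderiv2_diff:
  "F differentiable at x \<Longrightarrow> G differentiable at x \<Longrightarrow>
    pderiv2 (\<lambda>y. F y - G y) v x = pderiv2 F v x - pderiv2 G v x"
  by (rule pderiv2_eqI[OF has_derivative_diff[OF has_derivative_pderiv2 has_derivative_pderiv2]])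

lemma pderiv2_mult:
  "F differentiable at x \<Longrightarrow> G differentiable at x \<Longrightarrow>
    pderiv2 (\<lambda>y. F y * G y) v x = F x * pderiv2 G v x + pderiv2 F v x * G x"
  by (rule pderiv2_eqI[OF has_derivative_mult[OF has_derivative_pderiv2 has_derivative_pderiv2]])

lemma pderiv2_cmult:
  "F differentiable at x \<Longrightarrow> pderiv2 (\<lambda>y. k * F y) v x = k * pderiv2 F v x"
  by (rule pderiv2_eqI[OF has_derivative_mult_right[OF has_derivative_pderiv2]])

definition twice_differentiable_at :: "(real \<times> real \<Rightarrow> real) \<Rightarrow> real \<times> real \<Rightarrow> bool" where
  "twice_differentiable_at F x \<longleftrightarrow>
     (\<forall>\<^sub>F y in nhds x. F differentiable at y) \<and> (\<forall>v. pderiv2 F v differentiable at x)"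

lemma twice_differentiable_at_imp_differentiable:
  "twice_differentiable_at F x \<Longrightarrow> F differentiable at x"
  unfolding twice_differentiable_at_def using eventually_nhds_x_imp_x by blast

lemma twice_differentiable_at_pderiv2:
  "twice_differentiable_at F x \<Longrightarrow> pderiv2 F v differentiable at x"
  unfolding twice_differentiable_at_def by blast

lemma smooth_on_plane_imp_twice_differentiable_at:
  assumes "smooth_on_plane U F" "open U" "x \<in> U"
  shows "twice_differentiable_at F x"
proof -
  have "Ck_on 2 U F"
    using assms(1) unfolding smooth_on_plane_def by blast
  then have "F differentiable_on U" "\<And>v. pderiv2 F v differentiable_on U"
    by (auto simp: numeral_2_eq_2)
  then show ?thesis
    using assms(2,3) unfolding twice_differentiable_at_def
    by (auto simp: differentiable_on_eq_differentiable_at eventually_nhds)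
qed

lemma twice_differentiable_atI:
  assumes "\<forall>\<^sub>F y in nhds x. F differentiable at y"
    and "\<And>v. \<forall>\<^sub>F z in nhds x. pderiv2 F v z = H v z" and "\<And>v. H v differentiable at x"
  shows "twice_differentiable_at F x"
  unfolding twice_differentiable_at_def
  using assms differentiable_nhds_cong[OF assms(2)] by blast

lemma twice_differentiable_at_const: "twice_differentiable_at (\<lambda>y. k) x"
  by (rule twice_differentiable_atI[where H = "\<lambda>v z. 0"]) simp_all

lemma twice_differentiable_at_add:
  assumes F: "twice_differentiable_at F x" and G: "twice_differentiable_at G x"
  shows "twice_differentiable_at (\<lambda>y. F y + G y) x"
proof -
  have ev: "\<forall>\<^sub>F y in nhds x. F differentiable at y \<and> G differentiable at y"
    using F G unfolding twice_differentiable_at_def by (simp add: eventually_conj)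
  show ?thesis
  proof (rule twice_differentiable_atI)
    show "\<forall>\<^sub>F z in nhds x. pderiv2 (\<lambda>y. F y + G y) v z = pderiv2 F v z + pderiv2 G v z" for v
      using ev by eventually_elim (simp add: pderiv2_add)
  qed (use ev F G in \<open>auto simp: twice_differentiable_at_def elim: eventually_mono\<close>)
qed

lemma twice_differentiable_at_diff:
  assumes F: "twice_differentiable_at F x" and G: "twice_differentiable_at G x"
  shows "twice_differentiable_at (\<lambda>y. F y - G y) x"
proof -
  have ev: "\<forall>\<^sub>F y in nhds x. F differentiable at y \<and> G differentiable at y"
    using F G unfolding twice_differentiable_at_def by (simp add: eventually_conj)
  show ?thesis
  proof (rule twice_differentiable_atI)
    show "\<forall>\<^sub>F z in nhds x. pderiv2 (\<lambda>y. F y - G y) v z = pderiv2 F v z - pderiv2 G v z" for v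
      using ev by eventually_elim (simp add: pderiv2_diff)
  qed (use ev F G in \<open>auto simp: twice_differentiable_at_def elim: eventually_mono\<close>)
qed

lemma twice_differentiable_at_mult:
  assumes F: "twice_differentiable_at F x" and G: "twice_differentiable_at G x"
  shows "twice_differentiable_at (\<lambda>y. F y * G y) x"
proof -
  have ev: "\<forall>\<^sub>F y in nhds x. F differentiable at y \<and> G differentiable at y"
    using F G unfolding twice_differentiable_at_def by (simp add: eventually_conj)
  have "F differentiable at x" "G differentiable at x"
    using F G by (simp_all add: twice_differentiable_at_imp_differentiable)
  then show ?thesis
  proof (intro twice_differentiable_atI)
    show "\<forall>\<^sub>F z in nhds x. pderiv2 (\<lambda>y. F y * G y) v z
        = F z * pderiv2 G v z + pderiv2 F v z * G z" for v
      using ev by eventually_elim (simp add: pderiv2_mult)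
  qed (use ev F G in \<open>auto simp: twice_differentiable_at_def elim: eventually_mono\<close>)
qed

lemma twice_differentiable_at_cmult:
  "twice_differentiable_at F x \<Longrightarrow> twice_differentiable_at (\<lambda>y. k * F y) x"
  by (rule twice_differentiable_at_mult[OF twice_differentiable_at_const])

lemma pderiv2_pderiv2_diff:
  assumes F: "twice_differentiable_at F x" and G: "twice_differentiable_at G x"
  shows "pderiv2 (pderiv2 (\<lambda>y. F y - G y) v) w x
    = pderiv2 (pderiv2 F v) w x - pderiv2 (pderiv2 G v) w x"
proof -
  have "\<forall>\<^sub>F z in nhds x. pderiv2 (\<lambda>y. F y - G y) v z = pderiv2 F v z - pderiv2 G v z"
    using F G unfolding twice_differentiable_at_def
    by (auto simp: pderiv2_diff elim: eventually_elim2)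
  then have "pderiv2 (pderiv2 (\<lambda>y. F y - G y) v) w x
      = pderiv2 (\<lambda>z. pderiv2 F v z - pderiv2 G v z) w x"
    by (rule pderiv2_nhds_cong)
  also have "\<dots> = pderiv2 (pderiv2 F v) w x - pderiv2 (pderiv2 G v) w x"
    using F G by (simp add: pderiv2_diff twice_differentiable_at_pderiv2)
  finally show ?thesis .
qed

lemma has_derivative_mult_vanishing:
  fixes F G :: "'a::real_normed_vector \<Rightarrow> 'b::real_normed_algebra"
  assumes "F differentiable at x" "G differentiable at x" "F x = 0" "G x = 0"
  shows "((\<lambda>y. F y * G y) has_derivative (\<lambda>h. 0)) (at x)"
proof -
  obtain F' G' where "(F has_derivative F') (at x)" "(G has_derivative G') (at x)"
    using assms(1,2) unfolding differentiable_def by blast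
  from has_derivative_mult[OF this] show ?thesis
    by (simp add: assms(3,4))
qed

lemma pderiv2_pderiv2_mult_vanishing:
  assumes F: "twice_differentiable_at F x" and G: "twice_differentiable_at G x"
    and "F x = 0" "G x = 0"
  shows "pderiv2 (pderiv2 (\<lambda>y. F y * G y) v) w x
    = pderiv2 F v x * pderiv2 G w x + pderiv2 F w x * pderiv2 G v x"
proof -
  have dF: "F differentiable at x" and dG: "G differentiable at x"
    using F G by (simp_all add: twice_differentiable_at_imp_differentiable)
  have "\<forall>\<^sub>F z in nhds x. pderiv2 (\<lambda>y. F y * G y) v z = F z * pderiv2 G v z + pderiv2 F v z * G z"
    using F G unfolding twice_differentiable_at_def
    by (auto simp: pderiv2_mult elim: eventually_elim2)
  then have "pderiv2 (pderiv2 (\<lambda>y. F y * G y) v) w x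
      = pderiv2 (\<lambda>z. F z * pderiv2 G v z + pderiv2 F v z * G z) w x"
    by (rule pderiv2_nhds_cong)
  also have "\<dots> = pderiv2 F v x * pderiv2 G w x + pderiv2 F w x * pderiv2 G v x"
    using F G dF dG assms(3,4)
    by (simp add: pderiv2_add pderiv2_mult twice_differentiable_at_pderiv2)
  finally show ?thesis .
qed

lemma mult_diff_square_critical:
  assumes A: "twice_differentiable_at A x" and B: "twice_differentiable_at B x"
    and C: "twice_differentiable_at C x"
    and "A x = 0" "B x = 0" "C x = 0"
  shows "((\<lambda>y. A y * B y - C y * C y) has_derivative (\<lambda>h. 0)) (at x)"
    and "pderiv2 (pderiv2 (\<lambda>y. A y * B y - C y * C y) v) w x
      = pderiv2 A v x * pderiv2 B w x + pderiv2 A w x * pderiv2 B v x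
        - 2 * (pderiv2 C v x * pderiv2 C w x)"
proof -
  have "A differentiable at x" "B differentiable at x" "C differentiable at x"
    using A B C by (simp_all add: twice_differentiable_at_imp_differentiable)
  from has_derivative_diff[OF has_derivative_mult_vanishing has_derivative_mult_vanishing,
      OF this(1,2) assms(4,5) this(3,3) assms(6,6)]
  show "((\<lambda>y. A y * B y - C y * C y) has_derivative (\<lambda>h. 0)) (at x)"
    by simp
  show "pderiv2 (pderiv2 (\<lambda>y. A y * B y - C y * C y) v) w x
      = pderiv2 A v x * pderiv2 B w x + pderiv2 A w x * pderiv2 B v x
        - 2 * (pderiv2 C v x * pderiv2 C w x)"
    using assms
    by (simp add: pderiv2_pderiv2_diff pderiv2_pderiv2_mult_vanishing twice_differentiable_at_mult)
qed

lemma pderiv2_mult_diff_square: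
  assumes "a differentiable at x" "b differentiable at x" "c differentiable at x"
  shows "pderiv2 (\<lambda>y. a y * c y - b y * b y) v x
    = a x * pderiv2 c v x + pderiv2 a v x * c x - 2 * b x * pderiv2 b v x"
  using assms by (simp add: pderiv2_diff pderiv2_mult)

lemma pderiv2_half_mixed_discriminant:
  assumes "a differentiable at x" "b differentiable at x" "c differentiable at x"
    "e differentiable at x" "f differentiable at x" "g differentiable at x"
  shows "pderiv2 (\<lambda>y. 1/2 * (a y * g y + c y * e y - 2 * (b y * f y))) v x
    = 1/2 * (a x * pderiv2 g v x + pderiv2 a v x * g x + (c x * pderiv2 e v x + pderiv2 c v x * e x)
             - 2 * (b x * pderiv2 f v x + pderiv2 b v x * f x))"
  using assms
  by (subst pderiv2_cmult) (simp_all add: pderiv2_cmult pderiv2_add pderiv2_diff pderiv2_mult)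

lemma discr_gaussK_zero_imp:
  fixes a b c e f g :: real
  assumes "discr a b c e f g = 0" "gaussK a b c e f g = 0"
  shows "a*c - b*b = 0" "e*g - f*f = 0" "a*g + c*e - 2*(b*f) = 0"
proof -
  have "4 * (a*c - b*b)^2 + (a*g + c*e - 2*(b*f))^2 = 0"
    using assms unfolding discr_def gaussK_def by algebra
  then have "a*c - b*b = 0" "a*g + c*e - 2*(b*f) = 0"
    by (smt (verit) zero_le_power2 power_eq_0_iff)+
  with assms(2) show "a*c - b*b = 0" "e*g - f*f = 0" "a*g + c*e - 2*(b*f) = 0"
    by (simp_all add: gaussK_def power2_eq_square)
qed

text \<open>Both binary forms are degenerate and apolar to each other, hence proportional.\<close>

lemma degenerate_apolar_forms_proportional:
  fixes a b c e f g :: real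
  assumes "a*c - b*b = 0" "e*g - f*f = 0" "a*g + c*e - 2*(b*f) = 0"
  shows "a*g = c*e" "b*g = c*f" "a*f = b*e"
proof -
  have "(a*g - c*e)^2 = 0" "(b*g - c*f)^2 = 0" "(a*f - b*e)^2 = 0"
    using assms by algebra+
  then show "a*g = c*e" "b*g = c*f" "a*f = b*e"
    by simp_all
qed

text \<open>The left-hand side is dA dB + dB dA - 2 d(C/2) d(C/2) evaluated on two directions, where
  a1, ..., g1 and a2, ..., g2 are the derivatives of the coefficients along them.\<close>

lemma discr_hessian_rank_one:
  fixes a b c e f g a1 b1 c1 e1 f1 g1 a2 b2 c2 e2 f2 g2 :: real
  assumes "a*g = c*e" "b*g = c*f" "a*f = b*e"
  defines "l1 \<equiv> (c*e1 - 2*b*f1 + a*g1) - (g*a1 - 2*f*b1 + e*c1)"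
    and "l2 \<equiv> (c*e2 - 2*b*f2 + a*g2) - (g*a2 - 2*f*b2 + e*c2)"
  shows "(a*c1 + a1*c - 2*b*b1) * (e*g2 + e2*g - 2*f*f2)
       + (a*c2 + a2*c - 2*b*b2) * (e*g1 + e1*g - 2*f*f1)
       - 2 * (1/2 * (a*g1 + a1*g + (c*e1 + c1*e) - 2*(b*f1 + b1*f))
              * (1/2 * (a*g2 + a2*g + (c*e2 + c2*e) - 2*(b*f2 + b2*f))))
     = -1/2 * l1 * l2"
  using assms(1-3) unfolding l1_def l2_def by algebra

theorem mainTheorem6:
  fixes U :: "(real \<times> real) set" and p :: "real \<times> real"
    and a b c e f g :: "real \<times> real \<Rightarrow> real"
  assumes "open U" and "p \<in> U"
    and "smooth_on_plane U a" and "smooth_on_plane U b" and "smooth_on_plane U c"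
    and "smooth_on_plane U e" and "smooth_on_plane U f" and "smooth_on_plane U g"
    and "discr (a p) (b p) (c p) (e p) (f p) (g p) = 0"
    and "gaussK (a p) (b p) (c p) (e p) (f p) (g p) = 0"
  shows "((\<lambda>x. discr (a x) (b x) (c x) (e x) (f x) (g x)) has_derivative (\<lambda>h. 0)) (at p)
    \<and> hessian_det (\<lambda>x. discr (a x) (b x) (c x) (e x) (f x) (g x)) p = 0"
proof -
  have tw: "twice_differentiable_at a p" "twice_differentiable_at b p" "twice_differentiable_at c p"
    "twice_differentiable_at e p" "twice_differentiable_at f p" "twice_differentiable_at g p"
    using assms(1-8) by (simp_all add: smooth_on_plane_imp_twice_differentiable_at)
  then have d: "a differentiable at p" "b differentiable at p" "c differentiable at p"
    "e differentiable at p" "f differentiable at p" "g differentiable at p"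
    by (simp_all add: twice_differentiable_at_imp_differentiable)
  define A where "A = (\<lambda>y. a y * c y - b y * b y)"
  define B where "B = (\<lambda>y. e y * g y - f y * f y)"
  define C where "C = (\<lambda>y. 1/2 * (a y * g y + c y * e y - 2 * (b y * f y)))"
  have "twice_differentiable_at A p" "twice_differentiable_at B p" "twice_differentiable_at C p"
    unfolding A_def B_def C_def using tw
    by (intro twice_differentiable_at_diff twice_differentiable_at_add twice_differentiable_at_mult
        twice_differentiable_at_cmult; simp)+
  moreover have "A p = 0" "B p = 0" "C p = 0"
    using discr_gaussK_zero_imp[OF assms(9,10)] by (simp_all add: A_def B_def C_def)
  moreover have "(\<lambda>x. discr (a x) (b x) (c x) (e x) (f x) (g x)) = (\<lambda>y. A y * B y - C y * C y)"
    by (simp add: discr_def A_def B_def C_def fun_eq_iff power2_eq_square algebra_simps)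
  ultimately have crit: "((\<lambda>x. discr (a x) (b x) (c x) (e x) (f x) (g x)) has_derivative (\<lambda>h. 0)) (at p)"
    and hess: "pderiv2 (pderiv2 (\<lambda>x. discr (a x) (b x) (c x) (e x) (f x) (g x)) v) w p
      = pderiv2 A v p * pderiv2 B w p + pderiv2 A w p * pderiv2 B v p
        - 2 * (pderiv2 C v p * pderiv2 C w p)" for v w
    using mult_diff_square_critical by simp_all
  define l where "l v = (c p * pderiv2 e v p - 2 * b p * pderiv2 f v p + a p * pderiv2 g v p)
      - (g p * pderiv2 a v p - 2 * f p * pderiv2 b v p + e p * pderiv2 c v p)" for v
  have "pderiv2 (pderiv2 (\<lambda>x. discr (a x) (b x) (c x) (e x) (f x) (g x)) v) w p = -1/2 * l v * l w" for v w
    unfolding hess A_def B_def C_def l_def pderiv2_mult_diff_square[OF d(1-3)]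
      pderiv2_mult_diff_square[OF d(4-6)] pderiv2_half_mixed_discriminant[OF d]
    by (rule discr_hessian_rank_one
          [OF degenerate_apolar_forms_proportional[OF discr_gaussK_zero_imp[OF assms(9,10)]]])
  then show ?thesis
    using crit unfolding hessian_det_def by simp
qed

end
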